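(* Let $P$ be a priority forest in $\Pi(n)$. If $P$ is a tree, then $\mu(P,\hat1)=-1$. Otherwise $P=T_0\,T_1\cdots T_\ell$ with $\ell\ge1$, and $$\mu(P,\hat1)=(-1)^{\operatorname{corank}P}\prod_{k=0}^{\ell-1}e(T_k),$$ where $e(T)$ denotes the number of edges of $T$.
   Context: $[n]_0=\{0,\dots,n\}$. A priority forest on $[n]_0$ is a rooted forest with vertex set $[n]_0$ whose component trees $T_0,T_1,\dots,T_\ell$ (listed in this order) are increasing (each non-root vertex has a larger label than its parent) and satisfy: for $j<k$ every label of $T_j$ is smaller than every label of $T_k$. The priority lattice $\Pi(n)$ is the set of priority forests on $[n]_0$ ordered by inclusion of edge sets, together with an extra element $\hat1$ greater than all of them; $\mu$ denotes its Möbius function. Its rank function is $\rho(P)=|E(P)|$ and $\rho(\hat1)=n+1$; the corank of a priority forest $P$ is $n+1-\rho(P)$, which equals its number of component trees. *)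

theory Defs
  imports Main
begin

text \<open>A forest on the vertex set [n]_0 = {0..n} is encoded by its set of directed edges
  (parent, child).\<close>

definition conn :: "(nat \<times> nat) set \<Rightarrow> nat \<Rightarrow> nat \<Rightarrow> bool" where
  "conn E x y \<longleftrightarrow> (x, y) \<in> (E \<union> E\<inverse>)\<^sup>*"

definition priority_forest :: "nat \<Rightarrow> (nat \<times> nat) set \<Rightarrow> bool" where
  "priority_forest n E \<longleftrightarrow>
     E \<subseteq> {0..n} \<times> {0..n} \<and>
     (\<forall>(p, c) \<in> E. p < c) \<and>
     (\<forall>p p' c. (p, c) \<in> E \<longrightarrow> (p', c) \<in> E \<longrightarrow> p = p') \<and>
     (\<forall>x \<in> {0..n}. \<forall>y \<in> {0..n}. \<not> conn E x y \<longrightarrow>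
        (\<forall>x' y'. conn E x x' \<longrightarrow> conn E y y' \<longrightarrow> (x < y \<longleftrightarrow> x' < y')))"

text \<open>The priority lattice: priority forests (Some E) plus a top element None.\<close>
definition Pi_carrier :: "nat \<Rightarrow> (nat \<times> nat) set option set" where
  "Pi_carrier n = insert None (Some ` {E. priority_forest n E})"

fun Pi_le :: "(nat \<times> nat) set option \<Rightarrow> (nat \<times> nat) set option \<Rightarrow> bool" where
  "Pi_le _ None = True"
| "Pi_le None (Some _) = False"
| "Pi_le (Some E) (Some F) = (E \<subseteq> F)"

text \<open>The recursion is run with a fuel parameter; fuel card A suffices since every
  recursive call strictly decreases the upper argument.\<close>
fun mobius_fuel :: "nat \<Rightarrow> 'a set \<Rightarrow> ('a \<Rightarrow> 'a \<Rightarrow> bool) \<Rightarrow> 'a \<Rightarrow> 'a \<Rightarrow> int" where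
  "mobius_fuel 0 A le x y = (if x = y then 1 else 0)"
| "mobius_fuel (Suc k) A le x y =
     (if x = y then 1
      else if le x y then
        - (\<Sum>z \<in> {z \<in> A. le x z \<and> le z y \<and> z \<noteq> y}. mobius_fuel k A le x z)
      else 0)"

definition mobius :: "'a set \<Rightarrow> ('a \<Rightarrow> 'a \<Rightarrow> bool) \<Rightarrow> 'a \<Rightarrow> 'a \<Rightarrow> int" where
  "mobius A le x y = mobius_fuel (card A) A le x y"

definition mu_Pi :: "nat \<Rightarrow> (nat \<times> nat) set option \<Rightarrow> (nat \<times> nat) set option \<Rightarrow> int" where
  "mu_Pi n = mobius (Pi_carrier n) Pi_le"

text \<open>Roots of the forest, listed increasingly: r_0 < r_1 < ... < r_l. The k-th tree T_k
  is the component of r_k (by the priority condition, this is the k-th tree in the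
  order T_0, ..., T_l).\<close>
definition forest_roots :: "nat \<Rightarrow> (nat \<times> nat) set \<Rightarrow> nat list" where
  "forest_roots n E = sorted_list_of_set {v \<in> {0..n}. \<forall>p. (p, v) \<notin> E}"

definition tree_vertices :: "nat \<Rightarrow> (nat \<times> nat) set \<Rightarrow> nat \<Rightarrow> nat set" where
  "tree_vertices n E k = {v \<in> {0..n}. conn E (forest_roots n E ! k) v}"

definition tree_edges :: "nat \<Rightarrow> (nat \<times> nat) set \<Rightarrow> nat \<Rightarrow> nat" where
  "tree_edges n E k = card {(p, c) \<in> E. p \<in> tree_vertices n E k \<and> c \<in> tree_vertices n E k}"

definition corank :: "nat \<Rightarrow> (nat \<times> nat) set \<Rightarrow> nat" where
  "corank n E = n + 1 - card E"

end

theory Submission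
  imports Defs
begin

text \<open>Call (p, c) a bridge edge of E if c is the root of a tree T_(k+1) and p is a vertex of
  T_k. Adding to E a set S of bridge edges with at most one edge into each root gives again a
  priority forest, and every priority forest G \<supset> E contains a bridge edge. Hence the function
  that is (-1)^|G - E| if G - E consists of bridge edges and 0 otherwise sums to zero over every
  interval [E, G] with G \<noteq> E: its support there is a Boolean lattice on the nonempty set of
  bridge edges of G. So this function is \<mu>(E, -), and \<mu>(E, top) is minus its sum over all G,
  a signed count of the ways to pick at most one parent in T_k for each root of T_(k+1).
  That count factors as \<Prod>_k (1 - |T_k|) = \<Prod>_k (- e(T_k)).\<close>

section \<open>Moebius functions of finite posets\<close>

definition poset_Ico :: "'a set \<Rightarrow> ('a \<Rightarrow> 'a \<Rightarrow> bool) \<Rightarrow> 'a \<Rightarrow> 'a \<Rightarrow> 'a set" where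
  "poset_Ico A le x y = {z \<in> A. le x z \<and> le z y \<and> z \<noteq> y}"

lemma card_poset_Ico_less:
  assumes "finite A" "transp_on A le" "antisymp_on A le" "y \<in> A" "z \<in> poset_Ico A le x y"
  shows "card (poset_Ico A le x z) < card (poset_Ico A le x y)"
proof (rule psubset_card_mono)
  show "finite (poset_Ico A le x y)"
    using \<open>finite A\<close> unfolding poset_Ico_def by simp
  have "poset_Ico A le x z \<subseteq> poset_Ico A le x y"
  proof
    fix w
    assume w: "w \<in> poset_Ico A le x z"
    have z: "z \<in> A" "le x z" "le z y" "z \<noteq> y"
      using assms(5) unfolding poset_Ico_def by auto
    have w': "w \<in> A" "le x w" "le w z" "w \<noteq> z"
      using w unfolding poset_Ico_def by auto
    have "le w y"
      using transp_onD[OF assms(2) w'(1) z(1) assms(4) w'(3) z(3)] .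
    moreover have "w \<noteq> y"
      using antisymp_onD[OF assms(3) z(1) assms(4) z(3)] w'(3,4) by auto
    ultimately show "w \<in> poset_Ico A le x y"
      unfolding poset_Ico_def using w' by simp
  qed
  moreover have "z \<notin> poset_Ico A le x z"
    unfolding poset_Ico_def by simp
  ultimately show "poset_Ico A le x z \<subset> poset_Ico A le x y"
    using assms(5) by blast
qed

lemma mobius_fuel_Suc_eq:
  assumes "x \<noteq> y" "le x y"
  shows "mobius_fuel (Suc k) A le x y = - (\<Sum>z \<in> poset_Ico A le x y. mobius_fuel k A le x z)"
  using assms unfolding poset_Ico_def by simp

lemma mobius_fuel_trivial:
  "x = y \<or> \<not> le x y \<Longrightarrow> mobius_fuel k A le x y = (if x = y then 1 else 0)"
  by (cases k) auto

lemma mobius_fuel_stable: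
  assumes "finite A" "transp_on A le" "antisymp_on A le"
  shows "y \<in> A \<Longrightarrow> card (poset_Ico A le x y) \<le> k \<Longrightarrow>
    mobius_fuel (Suc k) A le x y = mobius_fuel k A le x y"
proof (induction k arbitrary: y)
  case 0
  then have "poset_Ico A le x y = {}"
    using \<open>finite A\<close> unfolding poset_Ico_def by simp
  then show ?case
    by (cases "x = y \<or> \<not> le x y")
      (auto simp: mobius_fuel_Suc_eq mobius_fuel_trivial simp del: mobius_fuel.simps(2))
next
  case (Suc k)
  have "mobius_fuel (Suc k) A le x z = mobius_fuel k A le x z" if "z \<in> poset_Ico A le x y" for z
    using Suc card_poset_Ico_less[OF assms Suc.prems(1) that] that
    unfolding poset_Ico_def by simp
  then show ?case
    by (cases "x = y \<or> \<not> le x y")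
      (auto simp: mobius_fuel_Suc_eq mobius_fuel_trivial simp del: mobius_fuel.simps
        intro: sum.cong)
qed

lemma mobius_fuel_eq_mobius:
  assumes "finite A" "transp_on A le" "antisymp_on A le" "y \<in> A"
    and "card (poset_Ico A le x y) \<le> k" "k \<le> card A"
  shows "mobius_fuel k A le x y = mobius A le x y"
  using assms(6)
proof (induction rule: inc_induct)
  case (step m)
  then show ?case
    using mobius_fuel_stable[OF assms(1-4)] assms(5) \<open>k \<le> m\<close> by simp
qed (simp add: mobius_def)

lemma mobius_self [simp]: "mobius A le x x = 1"
  unfolding mobius_def by (cases "card A") simp_all

lemma mobius_less:
  assumes "finite A" "transp_on A le" "antisymp_on A le" "y \<in> A" "le x y" "x \<noteq> y"
  shows "mobius A le x y = - (\<Sum>z \<in> poset_Ico A le x y. mobius A le x z)"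
proof -
  have "card (poset_Ico A le x y) \<le> card (A - {y})"
    using assms(1) by (intro card_mono) (auto simp: poset_Ico_def)
  also have "\<dots> < card A"
    using assms(1,4) by (rule card_Diff1_less)
  finally obtain m where m: "card A = Suc m" "card (poset_Ico A le x y) \<le> m"
    by (cases "card A") simp_all
  have "mobius_fuel m A le x z = mobius A le x z" if "z \<in> poset_Ico A le x y" for z
    using card_poset_Ico_less[OF assms(1-4) that] m that
    by (intro mobius_fuel_eq_mobius[OF assms(1-3)]) (simp_all add: poset_Ico_def)
  moreover have "mobius A le x y = - (\<Sum>z \<in> poset_Ico A le x y. mobius_fuel m A le x z)"
    using assms(5,6) m(1) unfolding mobius_def
    by (simp add: mobius_fuel_Suc_eq del: mobius_fuel.simps)
  ultimately show ?thesis
    by (simp cong: sum.cong)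
qed

section \<open>Signed counts of partial choice functions\<close>

lemma sum_minus_one_power_card_Pow:
  assumes "finite X" "X \<noteq> {}"
  shows "(\<Sum>S \<in> Pow X. (-1::int) ^ card S) = 0"
proof -
  have "(\<Sum>S \<in> Pow X. (-1::int) ^ card S) = (\<Prod>x \<in> X. 1 - 1)"
    using prod_diff_conv_sum[OF assms(1), of "\<lambda>_. 1::int" "\<lambda>_. 1"] by simp
  then show ?thesis
    using assms by (simp add: card_gt_0_iff)
qed

definition partial_choices :: "'b set \<Rightarrow> ('b \<Rightarrow> 'a set) \<Rightarrow> ('a \<times> 'b) set set" where
  "partial_choices C Par = {S. S \<subseteq> {(p, c). c \<in> C \<and> p \<in> Par c} \<and> single_valued (S\<inverse>)}"

lemma partial_choices_empty: "partial_choices {} Par = {{}}"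
  unfolding partial_choices_def by auto

lemma single_valued_converse_insert:
  "single_valued (R\<inverse>) \<Longrightarrow> c \<notin> Range R \<Longrightarrow> single_valued ((insert (p, c) R)\<inverse>)"
  unfolding single_valued_def by blast

lemma partial_choices_insert:
  assumes "c \<notin> C"
  shows "partial_choices (insert c C) Par =
    partial_choices C Par \<union> (\<lambda>(p, S). insert (p, c) S) ` (Par c \<times> partial_choices C Par)"
proof (intro equalityI subsetI)
  fix S
  assume S: "S \<in> partial_choices (insert c C) Par"
  show "S \<in> partial_choices C Par \<union> (\<lambda>(p, S). insert (p, c) S) ` (Par c \<times> partial_choices C Par)"
  proof (cases "\<exists>p. (p, c) \<in> S")
    case False
    then have "S \<in> partial_choices C Par"
      using S unfolding partial_choices_def by auto
    then show ?thesis
      by blast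
  next
    case True
    then obtain p where p: "(p, c) \<in> S"
      by blast
    have sv: "single_valued (S\<inverse>)"
      using S unfolding partial_choices_def by simp
    have "q = p" if "(q, c) \<in> S" for q
      using single_valuedD[OF sv, of c q p] that p by simp
    then have "S - {(p, c)} \<subseteq> {(p, c). c \<in> C \<and> p \<in> Par c}"
      using S unfolding partial_choices_def by auto
    moreover have "single_valued ((S - {(p, c)})\<inverse>)"
      using sv by (rule single_valued_subset[rotated]) auto
    moreover have "p \<in> Par c" "S = insert (p, c) (S - {(p, c)})"
      using S p unfolding partial_choices_def by auto
    ultimately show ?thesis
      unfolding partial_choices_def by blast
  qed
next
  fix S
  assume "S \<in> partial_choices C Par \<union> (\<lambda>(p, S). insert (p, c) S) ` (Par c \<times> partial_choices C Par)"
  then consider "S \<in> partial_choices C Par"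
    | p S' where "p \<in> Par c" "S' \<in> partial_choices C Par" "S = insert (p, c) S'"
    by blast
  then show "S \<in> partial_choices (insert c C) Par"
  proof cases
    case 1
    then show ?thesis
      unfolding partial_choices_def by auto
  next
    case 2
    then have "c \<notin> Range S'"
      using assms unfolding partial_choices_def by auto
    then have "single_valued (S\<inverse>)"
      using 2 single_valued_converse_insert[of S' c p] unfolding partial_choices_def by simp
    then show ?thesis
      using 2 unfolding partial_choices_def by auto
  qed
qed

lemma finite_partial_choices:
  assumes "finite C" "\<forall>c \<in> C. finite (Par c)"
  shows "finite (partial_choices C Par)" and "S \<in> partial_choices C Par \<Longrightarrow> finite S"
proof -
  have "{(p, c). c \<in> C \<and> p \<in> Par c} = (\<Union>c \<in> C. Par c \<times> {c})"
    by auto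
  then have "finite {(p, c). c \<in> C \<and> p \<in> Par c}"
    using assms by simp
  then show "finite (partial_choices C Par)" "S \<in> partial_choices C Par \<Longrightarrow> finite S"
    unfolding partial_choices_def by (auto intro: finite_subset)
qed

lemma sum_partial_choices_insert:
  assumes "finite C" "\<forall>c \<in> insert c C. finite (Par c)" "c \<notin> C"
  shows "(\<Sum>S \<in> partial_choices (insert c C) Par. (-1::int) ^ card S)
    = (1 - int (card (Par c))) * (\<Sum>S \<in> partial_choices C Par. (-1) ^ card S)"
proof -
  let ?P = "partial_choices C Par"
  let ?ext = "\<lambda>(p, S). insert (p, c) S"
  have fin: "finite ?P" "\<And>S. S \<in> ?P \<Longrightarrow> finite S" "finite (Par c)"
    using finite_partial_choices[of C Par] assms by auto
  have fresh: "(p, c) \<notin> S" if "S \<in> ?P" for p S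
    using that assms(3) unfolding partial_choices_def by auto
  have "inj_on ?ext (Par c \<times> ?P)"
  proof (rule inj_onI, clarify)
    fix p S q T
    assume "S \<in> ?P" "T \<in> ?P" and eq: "insert (p, c) S = insert (q, c) T"
    then show "p = q \<and> S = T"
      using fresh by (metis insert_ident insert_iff prod.inject)
  qed
  then have "(\<Sum>S \<in> ?ext ` (Par c \<times> ?P). (-1::int) ^ card S)
      = (\<Sum>x \<in> Par c \<times> ?P. (-1) ^ card (?ext x))"
    by (rule sum.reindex_cong) simp_all
  also have "\<dots> = (\<Sum>p \<in> Par c. \<Sum>S \<in> ?P. - ((-1) ^ card S))"
    unfolding sum.cartesian_product by (rule sum.cong) (auto simp: fin(2) fresh)
  finally have "(\<Sum>S \<in> ?ext ` (Par c \<times> ?P). (-1::int) ^ card S)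
      = - int (card (Par c)) * (\<Sum>S \<in> ?P. (-1) ^ card S)"
    by (simp add: sum_negf)
  moreover have "?P \<inter> ?ext ` (Par c \<times> ?P) = {}"
    using fresh by auto
  ultimately show ?thesis
    unfolding partial_choices_insert[OF assms(3)]
    using fin by (simp add: sum.union_disjoint algebra_simps)
qed

lemma sum_partial_choices:
  assumes "finite C" "\<forall>c \<in> C. finite (Par c)"
  shows "(\<Sum>S \<in> partial_choices C Par. (-1::int) ^ card S) = (\<Prod>c \<in> C. 1 - int (card (Par c)))"
  using assms
  by (induction C rule: finite_induct)
    (simp_all add: partial_choices_empty sum_partial_choices_insert)

section \<open>Roots and components of priority forests\<close>

lemma conn_refl [simp]: "conn E x x"
  unfolding conn_def by simp

lemma conn_sym: "conn E x y \<Longrightarrow> conn E y x"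
proof -
  assume "conn E x y"
  then have "(y, x) \<in> ((E \<union> E\<inverse>)\<inverse>)\<^sup>*"
    unfolding conn_def by (simp add: rtrancl_converseI)
  moreover have "(E \<union> E\<inverse>)\<inverse> = E \<union> E\<inverse>"
    by auto
  ultimately show ?thesis
    unfolding conn_def by simp
qed

lemma conn_trans: "conn E x y \<Longrightarrow> conn E y z \<Longrightarrow> conn E x z"
  unfolding conn_def by (rule rtrancl_trans)

lemma conn_edge: "(x, y) \<in> E \<Longrightarrow> conn E x y"
  unfolding conn_def by auto

lemma conn_edge_rev: "(y, x) \<in> E \<Longrightarrow> conn E x y"
  unfolding conn_def by auto

lemma conn_mono: "E \<subseteq> F \<Longrightarrow> conn E x y \<Longrightarrow> conn F x y"
  unfolding conn_def by (meson Un_mono converse_mono rtrancl_mono subsetD)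

lemma priority_forest_edge_le:
  "priority_forest n E \<Longrightarrow> (p, c) \<in> E \<Longrightarrow> p \<le> n \<and> c \<le> n"
  unfolding priority_forest_def by auto

lemma priority_forest_edge_less: "priority_forest n E \<Longrightarrow> (p, c) \<in> E \<Longrightarrow> p < c"
  unfolding priority_forest_def by auto

lemma priority_forest_parent_unique:
  "priority_forest n E \<Longrightarrow> (p, c) \<in> E \<Longrightarrow> (p', c) \<in> E \<Longrightarrow> p = p'"
  unfolding priority_forest_def by blast

lemma priority_forest_component_order:
  "priority_forest n E \<Longrightarrow> x \<le> n \<Longrightarrow> y \<le> n \<Longrightarrow> \<not> conn E x y \<Longrightarrow>
    conn E x x' \<Longrightarrow> conn E y y' \<Longrightarrow> x < y \<longleftrightarrow> x' < y'"
  unfolding priority_forest_def by (meson atLeastAtMost_iff le0)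

lemma priority_forestI:
  assumes "E \<subseteq> {0..n} \<times> {0..n}"
    and "\<And>p c. (p, c) \<in> E \<Longrightarrow> p < c"
    and "\<And>p p' c. (p, c) \<in> E \<Longrightarrow> (p', c) \<in> E \<Longrightarrow> p = p'"
    and order: "\<And>x y x' y'. y \<le> n \<Longrightarrow> x < y \<Longrightarrow> \<not> conn E x y \<Longrightarrow>
      conn E x x' \<Longrightarrow> conn E y y' \<Longrightarrow> x' < y'"
  shows "priority_forest n E"
proof -
  have "x < y \<longleftrightarrow> x' < y'"
    if "x \<le> n" "y \<le> n" "\<not> conn E x y" "conn E x x'" "conn E y y'" for x y x' y'
  proof -
    have "x \<noteq> y"
      using that(3) by auto
    then consider "x < y" | "y < x"
      by linarith
    then show ?thesis
    proof cases
      case 1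
      then show ?thesis
        using order that by blast
    next
      case 2
      then have "y' < x'"
        using order that conn_sym by blast
      then show ?thesis
        using 2 by simp
    qed
  qed
  then show ?thesis
    unfolding priority_forest_def using assms(1-3) by auto
qed

lemma priority_forest_finite: "priority_forest n E \<Longrightarrow> finite E"
  unfolding priority_forest_def by (meson finite_SigmaI finite_atLeastAtMost finite_subset)

lemma priority_forest_single_valued: "priority_forest n E \<Longrightarrow> single_valued (E\<inverse>)"
  by (auto intro: single_valuedI dest: priority_forest_parent_unique)

lemma inj_on_snd_priority_forest: "priority_forest n E \<Longrightarrow> inj_on snd E"
  by (rule inj_onI) (auto dest: priority_forest_parent_unique)

definition roots :: "nat \<Rightarrow> (nat \<times> nat) set \<Rightarrow> nat set" where
  "roots n E = {v \<in> {0..n}. \<forall>p. (p, v) \<notin> E}"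

lemma forest_roots_eq: "forest_roots n E = sorted_list_of_set (roots n E)"
  unfolding forest_roots_def roots_def by simp

lemma finite_roots [simp]: "finite (roots n E)"
  unfolding roots_def by simp

lemma zero_in_roots: "priority_forest n E \<Longrightarrow> 0 \<in> roots n E"
  unfolding roots_def using priority_forest_edge_less by fastforce

lemma rtrancl_if_conn_from_root:
  assumes "single_valued (F\<inverse>)" and root: "\<And>p. (p, r) \<notin> F" and "conn F r v"
  shows "(r, v) \<in> F\<^sup>*"
  using \<open>conn F r v\<close> unfolding conn_def
proof (induction rule: rtrancl_induct)
  case (step y z)
  show ?case
  proof (cases "(y, z) \<in> F")
    case True
    then show ?thesis
      using step.IH by simp
  next
    case False
    then have zy: "(z, y) \<in> F"
      using step.hyps by auto
    from step.IH show ?thesis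
    proof (cases rule: rtranclE)
      case base
      then show ?thesis
        using zy root by auto
    next
      case (step y')
      then show ?thesis
        using zy single_valuedD[OF \<open>single_valued (F\<inverse>)\<close>, of y y' z] by simp
    qed
  qed
qed simp

lemma root_le_if_conn:
  assumes pf: "priority_forest n E" and "r \<in> roots n E" "conn E r v"
  shows "r \<le> v"
proof -
  have "(r, v) \<in> E\<^sup>*"
    using rtrancl_if_conn_from_root[OF priority_forest_single_valued[OF pf]] assms(2,3)
    unfolding roots_def by blast
  then show ?thesis
    by (induction rule: rtrancl_induct)
      (auto dest: priority_forest_edge_less[OF pf])
qed

lemma roots_conn_eq:
  "priority_forest n E \<Longrightarrow> r \<in> roots n E \<Longrightarrow> s \<in> roots n E \<Longrightarrow> conn E r s \<Longrightarrow> r = s"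
  using root_le_if_conn conn_sym by (metis le_antisym)

lemma conn_if_between_parent_and_child:
  assumes pf: "priority_forest n E" and p: "(p, y) \<in> E" and "p < x" "x < y"
  shows "conn E x y"
proof (rule ccontr)
  assume "\<not> conn E x y"
  moreover have "x \<le> n" "y \<le> n"
    using priority_forest_edge_le[OF pf p] \<open>x < y\<close> by auto
  ultimately have "x < p"
    using priority_forest_component_order[OF pf _ _ _ conn_refl conn_edge_rev[OF p]] \<open>x < y\<close>
    by blast
  then show False
    using \<open>p < x\<close> by simp
qed

lemma conn_if_no_root_between:
  assumes pf: "priority_forest n E" and "b \<le> n" "a \<le> b"
    and no_root: "\<forall>r \<in> roots n E. a < r \<longrightarrow> b < r"
  shows "conn E a b"
  using assms(2-4)
proof (induction b rule: less_induct)
  case (less b)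
  show ?case
  proof (cases "a = b")
    case False
    then have "b \<notin> roots n E"
      using less.prems by auto
    then obtain p where p: "(p, b) \<in> E"
      using less.prems unfolding roots_def by auto
    have "p < b"
      using priority_forest_edge_less[OF pf p] .
    show ?thesis
    proof (cases "a \<le> p")
      case True
      moreover have "\<forall>r \<in> roots n E. a < r \<longrightarrow> p < r"
        using less.prems(3) \<open>p < b\<close> by auto
      ultimately have "conn E a p"
        using less.IH[of p] less.prems(1) \<open>p < b\<close> by simp
      then show ?thesis
        using conn_trans conn_edge[OF p] by blast
    next
      case False
      then show ?thesis
        using conn_if_between_parent_and_child[OF pf p] less.prems(2) \<open>a \<noteq> b\<close> by simp
    qed
  qed simp
qed

section \<open>Bridge edges\<close>

text \<open>For the root c of T_(k+1), the bridge parents of c are the vertices of T_k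
  (lemma bridge_parents_nth_root).\<close>

definition bridge_parents :: "nat \<Rightarrow> (nat \<times> nat) set \<Rightarrow> nat \<Rightarrow> nat set" where
  "bridge_parents n E c = {p. p < c \<and> (\<forall>r \<in> roots n E. r \<le> p \<or> c \<le> r)}"

definition bridge_edges :: "nat \<Rightarrow> (nat \<times> nat) set \<Rightarrow> (nat \<times> nat) set" where
  "bridge_edges n E = {(p, c). c \<in> roots n E \<and> p \<in> bridge_parents n E c}"

lemma bridge_edge_not_in: "e \<in> bridge_edges n E \<Longrightarrow> e \<notin> E"
  unfolding bridge_edges_def roots_def by auto

lemma bridge_edge_less: "(p, c) \<in> bridge_edges n E \<Longrightarrow> p < c"
  unfolding bridge_edges_def bridge_parents_def by auto

lemma finite_bridge_parents: "finite (bridge_parents n E c)"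
  unfolding bridge_parents_def by (rule finite_subset[of _ "{..<c}"]) auto

lemma no_edge_across_uncovered_root:
  assumes pf: "priority_forest n E" and S: "S \<subseteq> bridge_edges n E"
    and c: "c \<in> roots n E" "\<And>p. (p, c) \<notin> S" and ab: "(a, b) \<in> E \<union> S"
  shows "a < c \<longleftrightarrow> b < c"
proof (cases "(a, b) \<in> E")
  case True
  have "a < b" "a \<le> n" "b \<le> n" "c \<le> n"
    using priority_forest_edge_less[OF pf True] priority_forest_edge_le[OF pf True] c(1)
    unfolding roots_def by auto
  show ?thesis
  proof (rule ccontr)
    assume "\<not> (a < c \<longleftrightarrow> b < c)"
    then have "a < c" "c \<le> b"
      using \<open>a < b\<close> by auto
    have "\<not> conn E a c"
      using root_le_if_conn[OF pf c(1)] conn_sym \<open>a < c\<close> by (blast dest: leD)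
    then have "b < c"
      using priority_forest_component_order[OF pf \<open>a \<le> n\<close> \<open>c \<le> n\<close> _ conn_edge[OF True] conn_refl]
        \<open>a < c\<close> by blast
    then show False
      using \<open>c \<le> b\<close> by simp
  qed
next
  case False
  then have "(a, b) \<in> bridge_edges n E" "b \<noteq> c"
    using ab S c(2) by auto
  then have "a < b" "c \<le> a \<or> b \<le> c"
    using c(1) unfolding bridge_edges_def bridge_parents_def by auto
  then show ?thesis
    using \<open>b \<noteq> c\<close> by auto
qed

lemma conn_across_uncovered_root:
  assumes pf: "priority_forest n E" and S: "S \<subseteq> bridge_edges n E"
    and c: "c \<in> roots n E" "\<And>p. (p, c) \<notin> S" and "conn (E \<union> S) x y"
  shows "x < c \<longleftrightarrow> y < c"
  using \<open>conn (E \<union> S) x y\<close> unfolding conn_def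
proof (induction rule: rtrancl_induct)
  case (step y z)
  then have "(y, z) \<in> E \<union> S \<or> (z, y) \<in> E \<union> S"
    by auto
  then show ?case
    using no_edge_across_uncovered_root[OF pf S c] step.IH by blast
qed simp

lemma conn_union_if_roots_covered:
  assumes pf: "priority_forest n E" and S: "S \<subseteq> bridge_edges n E"
    and "y \<le> n" "x \<le> y" and covered: "\<forall>c \<in> roots n E. x < c \<and> c \<le> y \<longrightarrow> (\<exists>p. (p, c) \<in> S)"
  shows "conn (E \<union> S) x y"
  using assms(3-5)
proof (induction y rule: less_induct)
  case (less y)
  have E_conn: "conn (E \<union> S) u v" if "conn E u v" for u v
    using conn_mono[OF _ that] by blast
  show ?case
  proof (cases "x = y")
    case False
    then have "x < y"
      using less.prems by simp
    show ?thesis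
    proof (cases "y \<in> roots n E")
      case True
      then obtain p where p: "(p, y) \<in> S"
        using less.prems \<open>x < y\<close> by auto
      then have "p < y" "\<forall>r \<in> roots n E. r \<le> p \<or> y \<le> r"
        using S unfolding bridge_edges_def bridge_parents_def by auto
      have "conn (E \<union> S) x p"
      proof (cases "x \<le> p")
        case True
        then show ?thesis
          using less \<open>p < y\<close> by simp
      next
        case False
        then have "conn E p x"
          using conn_if_no_root_between[OF pf, of x p] \<open>\<forall>r \<in> roots n E. r \<le> p \<or> y \<le> r\<close>
            less.prems(1) \<open>x < y\<close> by fastforce
        then show ?thesis
          using E_conn conn_sym by blast
      qed
      then show ?thesis
        using conn_trans conn_edge[of p y "E \<union> S"] p by blast
    next
      case False
      then obtain p where p: "(p, y) \<in> E"
        using less.prems unfolding roots_def by auto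
      have "p < y"
        using priority_forest_edge_less[OF pf p] .
      show ?thesis
      proof (cases "x \<le> p")
        case True
        then have "conn (E \<union> S) x p"
          using less \<open>p < y\<close> by simp
        then show ?thesis
          using conn_trans conn_edge[of p y "E \<union> S"] p by blast
      next
        case False
        then show ?thesis
          using conn_if_between_parent_and_child[OF pf p] \<open>x < y\<close> E_conn by simp
      qed
    qed
  qed simp
qed

lemma priority_forest_union_bridges:
  assumes pf: "priority_forest n E" and S: "S \<subseteq> bridge_edges n E" "single_valued (S\<inverse>)"
  shows "priority_forest n (E \<union> S)"
proof (rule priority_forestI)
  have "S \<subseteq> {0..n} \<times> {0..n}"
  proof
    fix e
    assume "e \<in> S"
    then obtain p c where "e = (p, c)" "p < c" "c \<in> roots n E"
      using S(1) unfolding bridge_edges_def bridge_parents_def by auto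
    then show "e \<in> {0..n} \<times> {0..n}"
      unfolding roots_def by auto
  qed
  then show "E \<union> S \<subseteq> {0..n} \<times> {0..n}"
    using pf unfolding priority_forest_def by blast
  show "p < c" if "(p, c) \<in> E \<union> S" for p c
    using that S(1) priority_forest_edge_less[OF pf] bridge_edge_less by blast
  show "p = p'" if pc: "(p, c) \<in> E \<union> S" "(p', c) \<in> E \<union> S" for p p' c
  proof -
    have "(q, c) \<notin> E" if "(q', c) \<in> S" for q q'
      using that S(1) unfolding bridge_edges_def roots_def by auto
    then show ?thesis
      using pc priority_forest_parent_unique[OF pf] single_valuedD[OF S(2)] by blast
  qed
  show "x' < y'" if xy: "y \<le> n" "x < y" "\<not> conn (E \<union> S) x y"
    "conn (E \<union> S) x x'" "conn (E \<union> S) y y'" for x y x' y'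
  proof -
    have "\<not> (\<forall>c \<in> roots n E. x < c \<and> c \<le> y \<longrightarrow> (\<exists>p. (p, c) \<in> S))"
      using conn_union_if_roots_covered[OF pf S(1) xy(1)] xy(2,3) by (blast dest: less_imp_le)
    then obtain c where c: "c \<in> roots n E" "x < c" "c \<le> y" "\<And>p. (p, c) \<notin> S"
      by blast
    then show ?thesis
      using conn_across_uncovered_root[OF pf S(1) c(1,4)] xy(4,5) by fastforce
  qed
qed

lemma new_edge_target_in_roots:
  assumes "priority_forest n E" "priority_forest n F" "E \<subseteq> F" "(p, c) \<in> F - E"
  shows "c \<in> roots n E"
proof -
  have "(q, c) \<notin> E" for q
    using assms priority_forest_parent_unique[OF assms(2), of q c p] by blast
  then show ?thesis
    using priority_forest_edge_le[OF assms(2), of p c] assms(4) unfolding roots_def by auto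
qed

lemma edge_into_least_new_root_is_bridge:
  assumes pfF: "priority_forest n F" and p: "(p, c) \<in> F" and c: "c \<in> roots n E"
    and least: "\<And>r. r \<in> roots n E \<Longrightarrow> r < c \<Longrightarrow> (\<forall>q. (q, r) \<notin> F)"
  shows "(p, c) \<in> bridge_edges n E"
proof -
  have "\<not> (p < r \<and> r < c)" if r: "r \<in> roots n E" for r
  proof
    assume between: "p < r \<and> r < c"
    then have "r \<in> roots n F"
      using r least unfolding roots_def by auto
    have "r \<le> n" "c \<le> n"
      using r c unfolding roots_def by auto
    have "conn F r c"
    proof (rule ccontr)
      assume "\<not> conn F r c"
      then have "r < p"
        using priority_forest_component_order[OF pfF \<open>r \<le> n\<close> \<open>c \<le> n\<close> _ conn_refl]
          conn_edge_rev[OF p] between by blast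
      then show False
        using between by simp
    qed
    then have "r \<le> p"
      using root_le_if_conn[OF pfF \<open>r \<in> roots n F\<close>] conn_trans conn_edge_rev[OF p] by blast
    then show False
      using between by simp
  qed
  moreover have "p < c"
    using priority_forest_edge_less[OF pfF p] .
  ultimately show ?thesis
    using c unfolding bridge_edges_def bridge_parents_def by force
qed

lemma extension_meets_bridge_edges:
  assumes pf: "priority_forest n E" and pfF: "priority_forest n F" and "E \<subset> F"
  shows "F \<inter> bridge_edges n E \<noteq> {}"
proof -
  let ?D = "{c \<in> roots n E. \<exists>p. (p, c) \<in> F}"
  have "?D \<noteq> {}"
    using \<open>E \<subset> F\<close> new_edge_target_in_roots[OF pf pfF] by fast
  moreover have fin: "finite ?D"
    by (rule finite_subset[OF _ finite_roots]) auto
  ultimately have "Min ?D \<in> ?D"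
    by (intro Min_in)
  then obtain c p where c: "c = Min ?D" "c \<in> roots n E" and p: "(p, c) \<in> F"
    by blast
  have "\<forall>q. (q, r) \<notin> F" if r: "r \<in> roots n E" "r < c" for r
  proof (intro allI notI)
    fix q
    assume "(q, r) \<in> F"
    then have "c \<le> r"
      using Min_le[OF fin, of r] r(1) c(1) by blast
    then show False
      using r(2) by simp
  qed
  then have "(p, c) \<in> bridge_edges n E"
    using edge_into_least_new_root_is_bridge[OF pfF p c(2)] by blast
  then show ?thesis
    using p by blast
qed

section \<open>The upper interval of a priority forest\<close>

definition extensions :: "nat \<Rightarrow> (nat \<times> nat) set \<Rightarrow> (nat \<times> nat) set set" where
  "extensions n E = {F. priority_forest n F \<and> E \<subseteq> F}"

definition bridge_sign :: "nat \<Rightarrow> (nat \<times> nat) set \<Rightarrow> (nat \<times> nat) set \<Rightarrow> int" where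
  "bridge_sign n E F = (if F - E \<subseteq> bridge_edges n E then (-1) ^ card (F - E) else 0)"

lemma finite_extensions: "finite (extensions n E)"
  by (rule finite_subset[of _ "Pow ({0..n} \<times> {0..n})"])
    (auto simp: extensions_def priority_forest_def)

lemma finite_Pi_carrier: "finite (Pi_carrier n)"
  by (rule finite_subset[of _ "insert None (Some ` Pow ({0..n} \<times> {0..n}))"])
    (auto simp: Pi_carrier_def priority_forest_def)

lemma Pi_le_trans: "Pi_le x y \<Longrightarrow> Pi_le y z \<Longrightarrow> Pi_le x z"
  by (cases x; cases y; cases z) auto

lemma Pi_le_antisym: "Pi_le x y \<Longrightarrow> Pi_le y x \<Longrightarrow> x = y"
  by (cases x; cases y) auto

lemma transp_on_Pi_le: "transp_on A Pi_le"
  unfolding transp_on_def using Pi_le_trans by blast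

lemma antisymp_on_Pi_le: "antisymp_on A Pi_le"
  unfolding antisymp_on_def using Pi_le_antisym by blast

lemma poset_Ico_Pi_Some:
  "poset_Ico (Pi_carrier n) Pi_le (Some E) (Some G) = Some ` {H \<in> extensions n E. H \<subset> G}"
proof (rule set_eqI)
  fix z
  show "z \<in> poset_Ico (Pi_carrier n) Pi_le (Some E) (Some G) \<longleftrightarrow>
    z \<in> Some ` {H \<in> extensions n E. H \<subset> G}"
    by (cases z) (auto simp: poset_Ico_def Pi_carrier_def extensions_def)
qed

lemma poset_Ico_Pi_top:
  "poset_Ico (Pi_carrier n) Pi_le (Some E) None = Some ` extensions n E"
proof (rule set_eqI)
  fix z
  show "z \<in> poset_Ico (Pi_carrier n) Pi_le (Some E) None \<longleftrightarrow> z \<in> Some ` extensions n E"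
    by (cases z) (auto simp: poset_Ico_def Pi_carrier_def extensions_def)
qed

lemma sum_bridge_sign:
  assumes "\<G> \<subseteq> extensions n E"
  shows "(\<Sum>G \<in> \<G>. bridge_sign n E G)
    = (\<Sum>S \<in> {S. S \<subseteq> bridge_edges n E \<and> E \<union> S \<in> \<G>}. (-1) ^ card S)"
proof -
  have fin: "finite \<G>"
    using assms finite_extensions finite_subset by blast
  have sub: "E \<subseteq> G" if "G \<in> \<G>" for G
    using assms that unfolding extensions_def by blast
  have "(\<Sum>G \<in> \<G>. bridge_sign n E G)
      = (\<Sum>G \<in> {G \<in> \<G>. G - E \<subseteq> bridge_edges n E}. (-1) ^ card (G - E))"
    unfolding bridge_sign_def using fin by (rule sum.inter_filter[symmetric])
  also have "\<dots> = (\<Sum>S \<in> {S. S \<subseteq> bridge_edges n E \<and> E \<union> S \<in> \<G>}. (-1) ^ card S)"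
  proof (rule sum.reindex_bij_witness[where i = "\<lambda>S. E \<union> S" and j = "\<lambda>G. G - E"])
    show "E \<union> (G - E) = G" if "G \<in> {G \<in> \<G>. G - E \<subseteq> bridge_edges n E}" for G
      using that sub by auto
    show "(E \<union> S) - E = S" if "S \<in> {S. S \<subseteq> bridge_edges n E \<and> E \<union> S \<in> \<G>}" for S
      using that bridge_edge_not_in by blast
  qed (auto simp: Un_absorb1 sub)
  finally show ?thesis .
qed

lemma sum_bridge_sign_below:
  assumes pf: "priority_forest n E" and G: "G \<in> extensions n E" "E \<noteq> G"
  shows "(\<Sum>H \<in> {H \<in> extensions n E. H \<subseteq> G}. bridge_sign n E H) = 0"
proof -
  have pfG: "priority_forest n G" "E \<subseteq> G"
    using G unfolding extensions_def by auto
  have eq: "{S. S \<subseteq> bridge_edges n E \<and> E \<union> S \<in> {H \<in> extensions n E. H \<subseteq> G}}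
      = Pow (G \<inter> bridge_edges n E)"
  proof (intro equalityI subsetI)
    fix S
    assume "S \<in> Pow (G \<inter> bridge_edges n E)"
    then have S: "S \<subseteq> bridge_edges n E" "S \<subseteq> G"
      by auto
    have "single_valued (S\<inverse>)"
      using priority_forest_single_valued[OF pfG(1)] by (rule single_valued_subset[rotated])
        (use S(2) in auto)
    then have "priority_forest n (E \<union> S)"
      using priority_forest_union_bridges[OF pf S(1)] by simp
    then show "S \<in> {S. S \<subseteq> bridge_edges n E \<and> E \<union> S \<in> {H \<in> extensions n E. H \<subseteq> G}}"
      using S pfG(2) unfolding extensions_def by auto
  qed auto
  have "(\<Sum>H \<in> {H \<in> extensions n E. H \<subseteq> G}. bridge_sign n E H)
      = (\<Sum>S \<in> {S. S \<subseteq> bridge_edges n E \<and> E \<union> S \<in> {H \<in> extensions n E. H \<subseteq> G}}.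
          (-1) ^ card S)"
    by (rule sum_bridge_sign) auto
  also have "\<dots> = (\<Sum>S \<in> Pow (G \<inter> bridge_edges n E). (-1) ^ card S)"
    by (simp only: eq)
  also have "\<dots> = 0"
  proof (rule sum_minus_one_power_card_Pow)
    show "finite (G \<inter> bridge_edges n E)"
      using priority_forest_finite[OF pfG(1)] by simp
    show "G \<inter> bridge_edges n E \<noteq> {}"
      using extension_meets_bridge_edges[OF pf pfG(1)] pfG(2) G(2) by blast
  qed
  finally show ?thesis .
qed

lemma mu_Pi_Some_rec:
  assumes "G \<in> extensions n E" "E \<noteq> G"
  shows "mu_Pi n (Some E) (Some G)
    = - (\<Sum>H \<in> {H \<in> extensions n E. H \<subset> G}. mu_Pi n (Some E) (Some H))"
proof -
  have G: "Some G \<in> Pi_carrier n" "E \<subseteq> G"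
    using assms(1) unfolding extensions_def Pi_carrier_def by auto
  have "mu_Pi n (Some E) (Some G)
      = - (\<Sum>z \<in> poset_Ico (Pi_carrier n) Pi_le (Some E) (Some G). mu_Pi n (Some E) z)"
    unfolding mu_Pi_def
    by (rule mobius_less[OF finite_Pi_carrier transp_on_Pi_le antisymp_on_Pi_le G(1)])
      (use G assms(2) in simp_all)
  then show ?thesis
    by (simp add: poset_Ico_Pi_Some sum.reindex)
qed

lemma mu_Pi_top_rec:
  "mu_Pi n (Some E) None = - (\<Sum>G \<in> extensions n E. mu_Pi n (Some E) (Some G))"
proof -
  have "mu_Pi n (Some E) None
      = - (\<Sum>z \<in> poset_Ico (Pi_carrier n) Pi_le (Some E) None. mu_Pi n (Some E) z)"
    unfolding mu_Pi_def
    by (rule mobius_less[OF finite_Pi_carrier transp_on_Pi_le antisymp_on_Pi_le])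
      (simp_all add: Pi_carrier_def)
  then show ?thesis
    by (simp add: poset_Ico_Pi_top sum.reindex)
qed

lemma mu_Pi_extension:
  assumes pf: "priority_forest n E" and "G \<in> extensions n E"
  shows "mu_Pi n (Some E) (Some G) = bridge_sign n E G"
proof -
  have "finite G"
    using assms priority_forest_finite unfolding extensions_def by blast
  then show ?thesis
    using \<open>G \<in> extensions n E\<close>
  proof (induction G rule: finite_psubset_induct)
    case (psubset G)
    show ?case
    proof (cases "E = G")
      case True
      then show ?thesis
        by (simp add: mu_Pi_def bridge_sign_def)
    next
      case False
      have "{H \<in> extensions n E. H \<subseteq> G} = insert G {H \<in> extensions n E. H \<subset> G}"
        using psubset.prems by auto
      moreover have "finite {H \<in> extensions n E. H \<subset> G}"
        using finite_extensions by simp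
      ultimately have "bridge_sign n E G
          = - (\<Sum>H \<in> {H \<in> extensions n E. H \<subset> G}. bridge_sign n E H)"
        using sum_bridge_sign_below[OF pf psubset.prems False] by simp
      then show ?thesis
        using mu_Pi_Some_rec[OF psubset.prems False] psubset.IH by simp
    qed
  qed
qed

lemma bridge_extensions_eq_partial_choices:
  assumes pf: "priority_forest n E"
  shows "{S. S \<subseteq> bridge_edges n E \<and> E \<union> S \<in> extensions n E}
    = partial_choices (roots n E) (bridge_parents n E)"
proof (intro equalityI subsetI)
  fix S
  assume "S \<in> {S. S \<subseteq> bridge_edges n E \<and> E \<union> S \<in> extensions n E}"
  then have S: "S \<subseteq> bridge_edges n E" "priority_forest n (E \<union> S)"
    unfolding extensions_def by auto
  have "single_valued (S\<inverse>)"
    using priority_forest_single_valued[OF S(2)] by (rule single_valued_subset[rotated]) auto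
  then show "S \<in> partial_choices (roots n E) (bridge_parents n E)"
    using S(1) unfolding partial_choices_def bridge_edges_def by simp
next
  fix S
  assume "S \<in> partial_choices (roots n E) (bridge_parents n E)"
  then have "S \<subseteq> bridge_edges n E" "single_valued (S\<inverse>)"
    unfolding partial_choices_def bridge_edges_def by auto
  then show "S \<in> {S. S \<subseteq> bridge_edges n E \<and> E \<union> S \<in> extensions n E}"
    using priority_forest_union_bridges[OF pf] unfolding extensions_def by auto
qed

lemma mu_Pi_top:
  assumes pf: "priority_forest n E"
  shows "mu_Pi n (Some E) None = - (\<Prod>c \<in> roots n E. 1 - int (card (bridge_parents n E c)))"
proof -
  have "mu_Pi n (Some E) None = - (\<Sum>G \<in> extensions n E. mu_Pi n (Some E) (Some G))"
    by (rule mu_Pi_top_rec)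
  also have "\<dots> = - (\<Sum>G \<in> extensions n E. bridge_sign n E G)"
    using mu_Pi_extension[OF pf] by simp
  also have "(\<Sum>G \<in> extensions n E. bridge_sign n E G)
      = (\<Prod>c \<in> roots n E. 1 - int (card (bridge_parents n E c)))"
    by (simp add: sum_bridge_sign bridge_extensions_eq_partial_choices[OF pf]
        sum_partial_choices finite_bridge_parents)
  finally show ?thesis .
qed

section \<open>Roots in increasing order\<close>

lemma sorted_nth_Suc_le:
  fixes xs :: "'a::linorder list"
  assumes "sorted xs" "Suc k < length xs" "x \<in> set xs" "xs ! k < x"
  shows "xs ! Suc k \<le> x"
proof -
  obtain j where j: "j < length xs" "x = xs ! j"
    using assms(3) by (auto simp: in_set_conv_nth)
  have "\<not> j \<le> k"
    using sorted_nth_mono[OF assms(1), of j k] assms(2,4) j by auto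
  then show ?thesis
    using sorted_nth_mono[OF assms(1), of "Suc k" j] j by simp
qed

lemma forest_roots_nth_in_roots:
  "k < length (forest_roots n E) \<Longrightarrow> forest_roots n E ! k \<in> roots n E"
  using nth_mem[of k "forest_roots n E"] by (simp add: forest_roots_eq)

lemma forest_roots_nth_less:
  "Suc k < length (forest_roots n E) \<Longrightarrow> forest_roots n E ! k < forest_roots n E ! Suc k"
  unfolding forest_roots_eq using strict_sorted_list_of_set sorted_wrt_nth_less by blast

lemma no_root_between_consecutive:
  assumes "Suc k < length (forest_roots n E)" "r \<in> roots n E" "forest_roots n E ! k < r"
  shows "forest_roots n E ! Suc k \<le> r"
  using sorted_nth_Suc_le[of "forest_roots n E"] assms by (simp add: forest_roots_eq)

lemma bridge_parents_zero: "bridge_parents n E 0 = {}"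
  unfolding bridge_parents_def by simp

lemma bridge_parents_nth_root:
  assumes k: "Suc k < length (forest_roots n E)"
  shows "bridge_parents n E (forest_roots n E ! Suc k)
    = {forest_roots n E ! k ..< forest_roots n E ! Suc k}"
proof (intro equalityI subsetI)
  fix p
  assume "p \<in> bridge_parents n E (forest_roots n E ! Suc k)"
  then show "p \<in> {forest_roots n E ! k ..< forest_roots n E ! Suc k}"
    using forest_roots_nth_in_roots[of k n E] forest_roots_nth_less[OF k] k
    unfolding bridge_parents_def by fastforce
next
  fix p
  assume "p \<in> {forest_roots n E ! k ..< forest_roots n E ! Suc k}"
  then show "p \<in> bridge_parents n E (forest_roots n E ! Suc k)"
    using no_root_between_consecutive[OF k] unfolding bridge_parents_def
    by (auto simp: not_le intro: le_trans)
qed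

lemma tree_vertices_eq:
  assumes pf: "priority_forest n E" and k: "Suc k < length (forest_roots n E)"
  shows "tree_vertices n E k = {forest_roots n E ! k ..< forest_roots n E ! Suc k}"
proof -
  let ?r = "forest_roots n E ! k" and ?s = "forest_roots n E ! Suc k"
  have roots: "?r \<in> roots n E" "?s \<in> roots n E" "?r < ?s"
    using forest_roots_nth_in_roots k forest_roots_nth_less by auto
  then have "?r \<le> n" "?s \<le> n"
    unfolding roots_def by auto
  have "\<not> conn E ?r ?s"
    using roots_conn_eq[OF pf roots(1,2)] roots(3) by auto
  have "?r \<le> v \<and> v < ?s" if "conn E ?r v" for v
  proof
    show "?r \<le> v"
      using root_le_if_conn[OF pf roots(1) that] .
    show "v < ?s"
      using priority_forest_component_order[OF pf \<open>?r \<le> n\<close> \<open>?s \<le> n\<close> \<open>\<not> conn E ?r ?s\<close> that conn_refl]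
        roots(3) by blast
  qed
  moreover have "conn E ?r v" if "?r \<le> v" "v < ?s" for v
    using conn_if_no_root_between[OF pf _ that(1)] no_root_between_consecutive[OF k]
      that(2) \<open>?s \<le> n\<close> by fastforce
  ultimately show ?thesis
    using \<open>?s \<le> n\<close> unfolding tree_vertices_def by fastforce
qed

lemma card_tree_vertices:
  assumes pf: "priority_forest n E" and k: "k < length (forest_roots n E)"
  shows "card (tree_vertices n E k) = Suc (tree_edges n E k)"
proof -
  let ?r = "forest_roots n E ! k" and ?T = "tree_vertices n E k"
  let ?X = "{(p, c) \<in> E. p \<in> ?T \<and> c \<in> ?T}"
  have r: "?r \<in> roots n E" "?r \<in> ?T"
    using forest_roots_nth_in_roots[OF k] unfolding tree_vertices_def roots_def by auto
  have "snd ` ?X = ?T - {?r}"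
  proof (intro equalityI subsetI)
    fix c
    assume "c \<in> snd ` ?X"
    then show "c \<in> ?T - {?r}"
      using r(1) unfolding roots_def by auto
  next
    fix c
    assume c: "c \<in> ?T - {?r}"
    then have "c \<notin> roots n E"
      using roots_conn_eq[OF pf r(1)] unfolding tree_vertices_def by auto
    then obtain p where p: "(p, c) \<in> E"
      using c unfolding roots_def tree_vertices_def by auto
    have "conn E ?r p"
      using c conn_trans[OF _ conn_edge_rev[OF p]] unfolding tree_vertices_def by blast
    then have "p \<in> ?T"
      using priority_forest_edge_le[OF pf p] unfolding tree_vertices_def by simp
    then show "c \<in> snd ` ?X"
      using p c by force
  qed
  have "inj_on snd ?X"
    using inj_on_snd_priority_forest[OF pf] by (rule inj_on_subset) auto
  then have "tree_edges n E k = card (snd ` ?X)"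
    unfolding tree_edges_def by (simp add: card_image)
  also have "\<dots> = card ?T - 1"
    using \<open>snd ` ?X = ?T - {?r}\<close> r(2) by simp
  moreover have "card ?T > 0"
    using r(2) card_gt_0_iff[of ?T] unfolding tree_vertices_def by auto
  ultimately show ?thesis
    by simp
qed

lemma card_bridge_parents_nth_root:
  assumes pf: "priority_forest n E" and k: "Suc k < length (forest_roots n E)"
  shows "card (bridge_parents n E (forest_roots n E ! Suc k)) = Suc (tree_edges n E k)"
  using card_tree_vertices[OF pf, of k] k
  by (simp add: bridge_parents_nth_root tree_vertices_eq[OF pf k])

lemma corank_eq_card_roots:
  assumes pf: "priority_forest n E"
  shows "corank n E = card (roots n E)"
proof -
  have "card E = card (snd ` E)"
    using inj_on_snd_priority_forest[OF pf] by (rule card_image[symmetric])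
  also have "snd ` E = {0..n} - roots n E"
    using priority_forest_edge_le[OF pf] unfolding roots_def by force
  also have "card \<dots> = Suc n - card (roots n E)"
    by (subst card_Diff_subset) (auto simp: roots_def)
  finally have "card E = Suc n - card (roots n E)" .
  moreover have "card (roots n E) \<le> card {0..n}"
    by (rule card_mono) (auto simp: roots_def)
  ultimately show ?thesis
    unfolding corank_def by simp
qed

lemma forest_roots_first:
  assumes "priority_forest n E"
  shows "forest_roots n E \<noteq> []" "forest_roots n E ! 0 = 0"
proof -
  have "0 \<in> set (forest_roots n E)"
    using zero_in_roots[OF assms] by (simp add: forest_roots_eq)
  then obtain j where "j < length (forest_roots n E)" "forest_roots n E ! j = 0"
    by (auto simp: in_set_conv_nth)
  then show "forest_roots n E \<noteq> []" "forest_roots n E ! 0 = 0"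
    using sorted_nth_mono[of "forest_roots n E" 0 j] by (auto simp: forest_roots_eq)
qed

lemma mu_Pi_top_eq_prod_tree_edges:
  assumes pf: "priority_forest n E"
  defines "L \<equiv> length (forest_roots n E)"
  shows "mu_Pi n (Some E) None = (-1) ^ L * (\<Prod>k < L - 1. int (tree_edges n E k))"
proof -
  let ?R = "forest_roots n E"
  let ?f = "\<lambda>c. 1 - int (card (bridge_parents n E c))"
  obtain l where l: "L = Suc l"
    using forest_roots_first(1)[OF pf] unfolding L_def by (cases ?R) auto
  have "mu_Pi n (Some E) None = - (\<Prod>k < Suc l. ?f (?R ! k))"
    using mu_Pi_top[OF pf] prod.reindex_bij_betw[OF bij_betw_nth[of ?R], of "{..<Suc l}" _ ?f] l
    unfolding L_def by (simp add: forest_roots_eq)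
  also have "\<dots> = - (?f (?R ! 0) * (\<Prod>k < l. ?f (?R ! Suc k)))"
    by (simp only: prod.lessThan_Suc_shift)
  also have "\<dots> = - (\<Prod>k < l. - int (tree_edges n E k))"
  proof -
    have "?f (?R ! Suc k) = - int (tree_edges n E k)" if "k < l" for k
      using card_bridge_parents_nth_root[OF pf, of k] that l unfolding L_def by simp
    then show ?thesis
      using forest_roots_first(2)[OF pf] by (simp add: bridge_parents_zero)
  qed
  also have "\<dots> = (-1) ^ Suc l * (\<Prod>k < l. int (tree_edges n E k))"
    by (simp add: prod_uminus)
  finally show ?thesis
    using l by simp
qed

theorem lemma5p13:
  fixes n :: nat and E :: "(nat \<times> nat) set"
  assumes "priority_forest n E"
  shows "(length (forest_roots n E) = 1 \<longrightarrow> mu_Pi n (Some E) None = -1) \<and>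
         (length (forest_roots n E) \<noteq> 1 \<longrightarrow>
            length (forest_roots n E) \<ge> 2 \<and>
            mu_Pi n (Some E) None =
              (-1) ^ corank n E * (\<Prod>k < length (forest_roots n E) - 1. int (tree_edges n E k)))"
proof -
  have "length (forest_roots n E) = corank n E"
    using corank_eq_card_roots[OF assms] by (simp add: forest_roots_eq)
  moreover have "length (forest_roots n E) \<noteq> 0"
    using forest_roots_first(1)[OF assms] by simp
  ultimately show ?thesis
    using mu_Pi_top_eq_prod_tree_edges[OF assms] by auto
qed

end
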